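(* Let $(M,\mathbf g,\nabla)$ be a Riemann–Cartan space with Levi-Civita connection $D$, let $\{\mathbf e_\alpha\}$ be a moving frame with dual coframe $\{\theta^\alpha\}$, and let $\boldsymbol\partial=\theta^\alpha\nabla_{\mathbf e_\alpha}$ be the Dirac operator acting on sections of the Clifford bundle $\mathcal C\ell(M,\mathtt g)$. Then for every smooth scalar function $f$, $$\boldsymbol\partial^2 f=g^{\beta\rho}\nabla_{\mathbf e_\beta}\nabla_{\mathbf e_\rho}f-g^{\beta\rho}\Gamma^{\alpha}_{\beta\rho}\mathbf e_\alpha(f)-\tfrac12 T^{\alpha}_{\beta\rho}\,\theta^\beta\wedge\theta^\rho\,\mathbf e_\alpha(f),$$ and equivalently $$\boldsymbol\partial^2 f=g^{\beta\alpha}\nabla_{\mathbf e_\beta}\nabla_{\mathbf e_\alpha}f-g^{\beta\rho}\mathring\Gamma^{\alpha}_{\beta\rho}\mathbf e_\alpha(f)+T^{\alpha}_{\alpha\beta}\,\mathbf e^\beta(f)-\tfrac12T^{\alpha}_{\rho\sigma}\,\theta^\rho\wedge\theta^\sigma\,\mathbf e_\alpha(f),$$ where $\mathbf e^\beta=g^{\beta\delta}\mathbf e_\delta$.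
   Context: $\mathbf g$ is a smooth nondegenerate metric on $M$, $g^{\alpha\beta}=\theta^\alpha\cdot\theta^\beta$. A Riemann–Cartan space is a triple $(M,\mathbf g,\nabla)$ with $\nabla$ a linear connection, $\nabla\mathbf g=0$, and nonzero torsion; $\nabla$ acts on forms (as sections of the Clifford bundle of differential forms, where $uv=u\cdot v+u\wedge v$ for $1$-forms) as a derivation, and on functions by $\nabla_{\mathbf e_\alpha}f=\mathbf e_\alpha(f)$. Notation: $[\mathbf e_\beta,\mathbf e_\rho]=c^\alpha_{\beta\rho}\mathbf e_\alpha$, $\nabla_{\mathbf e_\beta}\theta^\alpha=-\Gamma^\alpha_{\beta\rho}\theta^\rho$, $D_{\mathbf e_\beta}\theta^\alpha=-\mathring\Gamma^\alpha_{\beta\rho}\theta^\rho$, torsion components $T^\alpha_{\beta\rho}=\Gamma^\alpha_{\beta\rho}-\Gamma^\alpha_{\rho\beta}-c^\alpha_{\beta\rho}$. $\boldsymbol\partial^2f$ means $\theta^\beta\nabla_{\mathbf e_\beta}(\theta^\rho\nabla_{\mathbf e_\rho}f)$ with Clifford products. *)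

theory Defs
  imports Complex_Main "HOL-Library.Function_Algebras" "HOL-Library.Product_Plus"
begin

text \<open>
  Local (moving-frame) model of a Riemann--Cartan space.
  'm : points of M;  'i : finite frame index set.
  Scalar fields are functions 'm => real (pointwise ring operations);
  the algebra of smooth functions is an abstract set C of such functions.
  E a : the frame vector field e_a, acting on smooth functions.
  gi a b : inverse metric components g^{ab} = theta^a . theta^b.
  Gam a b r : connection coefficients Gamma^a_{br}, i.e.
      nabla_{e_b} theta^a = - sum_r Gamma^a_{br} theta^r.
  c a b r : structure functions, [e_b, e_r] = sum_a c^a_{br} e_a.
  A 1-form sum_a u_a theta^a is represented by its components u :: 'i => 'm => real.
  A section of the grade 0 + grade 2 part of the Clifford bundle is a pair
  (s, B) representing  s + (1/2) sum_{a,b} B a b theta^a /\ theta^b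
  with B antisymmetric.
\<close>

definition const_fn :: "real \<Rightarrow> 'm \<Rightarrow> real" where
  "const_fn r = (\<lambda>_. r)"

definition smooth_algebra :: "('m \<Rightarrow> real) set \<Rightarrow> bool" where
  "smooth_algebra C \<longleftrightarrow> (\<forall>r. const_fn r \<in> C) \<and>
     (\<forall>f\<in>C. \<forall>h\<in>C. f + h \<in> C \<and> f * h \<in> C \<and> - f \<in> C)"

definition frame_derivations ::
  "('m \<Rightarrow> real) set \<Rightarrow> ('i \<Rightarrow> ('m \<Rightarrow> real) \<Rightarrow> ('m \<Rightarrow> real)) \<Rightarrow> bool" where
  "frame_derivations C E \<longleftrightarrow> (\<forall>a. \<forall>f\<in>C. \<forall>h\<in>C. \<forall>r.
      E a f \<in> C \<and> E a (f + h) = E a f + E a h \<and>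
      E a (const_fn r * f) = const_fn r * E a f \<and>
      E a (f * h) = E a f * h + f * E a h)"

definition frame_brackets ::
  "('m \<Rightarrow> real) set \<Rightarrow> ('i \<Rightarrow> ('m \<Rightarrow> real) \<Rightarrow> ('m \<Rightarrow> real)) \<Rightarrow>
   ('i \<Rightarrow> 'i \<Rightarrow> 'i \<Rightarrow> 'm \<Rightarrow> real) \<Rightarrow> bool" where
  "frame_brackets C E c \<longleftrightarrow> (\<forall>b r. \<forall>f\<in>C.
      E b (E r f) - E r (E b f) = (\<Sum>a\<in>UNIV. c a b r * E a f))"

definition nondeg_metric ::
  "('m \<Rightarrow> real) set \<Rightarrow> ('i::finite \<Rightarrow> 'i \<Rightarrow> 'm \<Rightarrow> real) \<Rightarrow> bool" where
  "nondeg_metric C gi \<longleftrightarrow> (\<forall>a b. gi a b \<in> C \<and> gi a b = gi b a) \<and>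
     (\<exists>gl. \<forall>x a b. (\<Sum>s\<in>UNIV. gi a s x * gl s b x) = (if a = b then 1 else 0))"

definition torsion ::
  "('i \<Rightarrow> 'i \<Rightarrow> 'i \<Rightarrow> 'm \<Rightarrow> real) \<Rightarrow> ('i \<Rightarrow> 'i \<Rightarrow> 'i \<Rightarrow> 'm \<Rightarrow> real) \<Rightarrow>
   'i \<Rightarrow> 'i \<Rightarrow> 'i \<Rightarrow> 'm \<Rightarrow> real" where
  "torsion Gam c a b r = Gam a b r - Gam a r b - c a b r"

text \<open>nabla g = 0, written for g^{ar} = theta^a . theta^r:
  e_b(g^{ar}) = - Gamma^a_{bs} g^{sr} - Gamma^r_{bs} g^{as}.\<close>
definition metric_compatible ::
  "('i \<Rightarrow> ('m \<Rightarrow> real) \<Rightarrow> ('m \<Rightarrow> real)) \<Rightarrow> ('i::finite \<Rightarrow> 'i \<Rightarrow> 'm \<Rightarrow> real) \<Rightarrow>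
   ('i \<Rightarrow> 'i \<Rightarrow> 'i \<Rightarrow> 'm \<Rightarrow> real) \<Rightarrow> bool" where
  "metric_compatible E gi Gam \<longleftrightarrow> (\<forall>a b r.
      E b (gi a r) = - (\<Sum>s\<in>UNIV. Gam a b s * gi s r + Gam r b s * gi a s))"

definition riemann_cartan ::
  "('m \<Rightarrow> real) set \<Rightarrow> ('i::finite \<Rightarrow> ('m \<Rightarrow> real) \<Rightarrow> ('m \<Rightarrow> real)) \<Rightarrow>
   ('i \<Rightarrow> 'i \<Rightarrow> 'i \<Rightarrow> 'm \<Rightarrow> real) \<Rightarrow> ('i \<Rightarrow> 'i \<Rightarrow> 'm \<Rightarrow> real) \<Rightarrow>
   ('i \<Rightarrow> 'i \<Rightarrow> 'i \<Rightarrow> 'm \<Rightarrow> real) \<Rightarrow> bool" where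
  "riemann_cartan C E c gi Gam \<longleftrightarrow>
     smooth_algebra C \<and> frame_derivations C E \<and>
     (\<forall>a b r. c a b r \<in> C) \<and> frame_brackets C E c \<and>
     nondeg_metric C gi \<and>
     (\<forall>a b r. Gam a b r \<in> C) \<and> metric_compatible E gi Gam \<and>
     (\<exists>a b r. torsion Gam c a b r \<noteq> 0)"

definition levi_civita ::
  "('m \<Rightarrow> real) set \<Rightarrow> ('i::finite \<Rightarrow> ('m \<Rightarrow> real) \<Rightarrow> ('m \<Rightarrow> real)) \<Rightarrow>
   ('i \<Rightarrow> 'i \<Rightarrow> 'i \<Rightarrow> 'm \<Rightarrow> real) \<Rightarrow> ('i \<Rightarrow> 'i \<Rightarrow> 'm \<Rightarrow> real) \<Rightarrow>
   ('i \<Rightarrow> 'i \<Rightarrow> 'i \<Rightarrow> 'm \<Rightarrow> real) \<Rightarrow> bool" where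
  "levi_civita C E c gi LC \<longleftrightarrow> (\<forall>a b r. LC a b r \<in> C) \<and>
     metric_compatible E gi LC \<and> (\<forall>a b r. torsion LC c a b r = 0)"

definition theta :: "'i \<Rightarrow> 'i \<Rightarrow> 'm \<Rightarrow> real" where
  "theta b = (\<lambda>a. if a = b then 1 else 0)"

definition scal :: "('m \<Rightarrow> real) \<Rightarrow> ('m \<Rightarrow> real) \<times> ('i \<Rightarrow> 'i \<Rightarrow> 'm \<Rightarrow> real)" where
  "scal s = (s, 0)"

text \<open>u /\ v = sum_{a,b} u_a v_b theta^a/\theta^b = (1/2) sum (u_a v_b - u_b v_a) theta^a/\theta^b\<close>
definition wedge1 :: "('i \<Rightarrow> 'm \<Rightarrow> real) \<Rightarrow> ('i \<Rightarrow> 'm \<Rightarrow> real) \<Rightarrow>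
    ('m \<Rightarrow> real) \<times> ('i \<Rightarrow> 'i \<Rightarrow> 'm \<Rightarrow> real)" where
  "wedge1 u v = (0, \<lambda>a b. u a * v b - u b * v a)"

definition fscale :: "('m \<Rightarrow> real) \<Rightarrow> ('m \<Rightarrow> real) \<times> ('i \<Rightarrow> 'i \<Rightarrow> 'm \<Rightarrow> real) \<Rightarrow>
    ('m \<Rightarrow> real) \<times> ('i \<Rightarrow> 'i \<Rightarrow> 'm \<Rightarrow> real)" where
  "fscale h X = (h * fst X, \<lambda>a b. h * snd X a b)"

text \<open>Clifford product of 1-forms: uv = u.v + u/\v, with u.v = g^{ab} u_a v_b.\<close>
definition clif1 :: "('i::finite \<Rightarrow> 'i \<Rightarrow> 'm \<Rightarrow> real) \<Rightarrow> ('i \<Rightarrow> 'm \<Rightarrow> real) \<Rightarrow>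
    ('i \<Rightarrow> 'm \<Rightarrow> real) \<Rightarrow> ('m \<Rightarrow> real) \<times> ('i \<Rightarrow> 'i \<Rightarrow> 'm \<Rightarrow> real)" where
  "clif1 gi u v = scal (\<Sum>a\<in>UNIV. \<Sum>b\<in>UNIV. gi a b * u a * v b) + wedge1 u v"

text \<open>nabla_{e_b} on a 1-form u = sum_r u_r theta^r (derivation, nabla theta^r = -Gamma^r_{bs} theta^s).\<close>
definition nabla1 :: "('i::finite \<Rightarrow> ('m \<Rightarrow> real) \<Rightarrow> ('m \<Rightarrow> real)) \<Rightarrow>
    ('i \<Rightarrow> 'i \<Rightarrow> 'i \<Rightarrow> 'm \<Rightarrow> real) \<Rightarrow> 'i \<Rightarrow> ('i \<Rightarrow> 'm \<Rightarrow> real) \<Rightarrow> ('i \<Rightarrow> 'm \<Rightarrow> real)" where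
  "nabla1 E Gam b u = (\<lambda>s. E b (u s) - (\<Sum>r\<in>UNIV. u r * Gam r b s))"

text \<open>Dirac operator theta^b nabla_{e_b} on scalars (gives a 1-form) and on 1-forms.\<close>
definition dirac0 :: "('i \<Rightarrow> ('m \<Rightarrow> real) \<Rightarrow> ('m \<Rightarrow> real)) \<Rightarrow> ('m \<Rightarrow> real) \<Rightarrow> 'i \<Rightarrow> 'm \<Rightarrow> real" where
  "dirac0 E f = (\<lambda>r. E r f)"

definition dirac1 :: "('i::finite \<Rightarrow> 'i \<Rightarrow> 'm \<Rightarrow> real) \<Rightarrow> ('i \<Rightarrow> ('m \<Rightarrow> real) \<Rightarrow> ('m \<Rightarrow> real)) \<Rightarrow>
    ('i \<Rightarrow> 'i \<Rightarrow> 'i \<Rightarrow> 'm \<Rightarrow> real) \<Rightarrow> ('i \<Rightarrow> 'm \<Rightarrow> real) \<Rightarrow>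
    ('m \<Rightarrow> real) \<times> ('i \<Rightarrow> 'i \<Rightarrow> 'm \<Rightarrow> real)" where
  "dirac1 gi E Gam u = (\<Sum>b\<in>UNIV. clif1 gi (theta b) (nabla1 E Gam b u))"

end

theory Submission
  imports Defs
begin

text \<open>
  Applying theta^b nabla_b to the 1-form df = e_r(f) theta^r gives the scalar
  g^{br} (e_b e_r f - Gamma^a_{br} e_a f) plus a bivector whose components are the
  antisymmetrised second derivatives; the bracket relation of the frame turns these into
  - T^a_{br} e_a f, and since the contraction of T with e_a f is antisymmetric in b, r,
  this is the first formula.

  For the second, write Gamma = LC + K with the contorsion K. Both connections are metric, so
  K is skew with respect to g: hence its trace K^a_{ba} vanishes, and
  g^{br} K^a_{br} e_a = - K^a_{ab} e^b. As LC is torsion free,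
  T^a_{ab} = K^a_{ab} - K^a_{ba} = K^a_{ab}, which yields the torsion trace term.
\<close>

lemma sum_apply: "(\<Sum>a\<in>A. f a) x = (\<Sum>a\<in>A. f a x)"
  by (induction A rule: infinite_finite_induct) auto

lemma if_zero_mult:
  fixes y z :: "'a::mult_zero"
  shows "(if P then y else 0) * z = (if P then y * z else 0)"
    and "z * (if P then y else 0) = (if P then z * y else 0)"
  by simp_all

lemma sum_if_zero: "(\<Sum>x\<in>A. if P then f x else 0) = (if P then sum f A else 0)"
  by simp

lemma sum_swap3:
  "(\<Sum>x\<in>A. \<Sum>y\<in>B. \<Sum>z\<in>C. f x y z) = (\<Sum>z\<in>C. \<Sum>x\<in>A. \<Sum>y\<in>B. f x y z)"
proof -
  have "(\<Sum>x\<in>A. \<Sum>y\<in>B. \<Sum>z\<in>C. f x y z) = (\<Sum>x\<in>A. \<Sum>z\<in>C. \<Sum>y\<in>B. f x y z)"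
    by (rule sum.cong[OF refl sum.swap])
  also have "\<dots> = (\<Sum>z\<in>C. \<Sum>x\<in>A. \<Sum>y\<in>B. f x y z)"
    by (rule sum.swap)
  finally show ?thesis .
qed

text \<open>The difference K of two metric connections: reading K a b s as K^a_{bs}, each K_b
  is skew-adjoint with respect to g.\<close>
definition metric_skew ::
    "('i::finite \<Rightarrow> 'i \<Rightarrow> 'a::comm_ring_1) \<Rightarrow> ('i \<Rightarrow> 'i \<Rightarrow> 'i \<Rightarrow> 'a) \<Rightarrow> bool" where
  "metric_skew g K \<longleftrightarrow> (\<forall>a b r. (\<Sum>s\<in>UNIV. K a b s * g s r + K r b s * g a s) = 0)"

lemma right_inverse_symmetric:
  fixes g h :: "'i::finite \<Rightarrow> 'i \<Rightarrow> 'a::comm_ring_1"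
  assumes sym: "\<And>a b. g a b = g b a"
    and inv: "\<And>a b. (\<Sum>s\<in>UNIV. g a s * h s b) = (if a = b then 1 else 0)"
  shows "h a b = h b a"
proof -
  have left_inv: "(\<Sum>s\<in>UNIV. h s a * g s u) = (if a = u then 1 else 0)" for u
    using inv[of u a] by (simp add: sym mult.commute eq_commute)
  have "h a b = (\<Sum>u\<in>UNIV. (\<Sum>s\<in>UNIV. h s a * g s u) * h u b)"
    by (simp add: left_inv if_zero_mult cong: if_cong)
  also have "\<dots> = (\<Sum>s\<in>UNIV. h s a * (\<Sum>u\<in>UNIV. g s u * h u b))"
    by (simp only: sum_distrib_left sum_distrib_right mult.assoc) (rule sum.swap)
  also have "\<dots> = h b a"
    by (simp add: inv if_zero_mult cong: if_cong)
  finally show ?thesis .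
qed

text \<open>Without the last hypothesis the trace can be nonzero, e.g. in characteristic 2.\<close>
lemma metric_skew_trace:
  fixes g h :: "'i::finite \<Rightarrow> 'i \<Rightarrow> 'a::comm_ring_1"
  assumes skew: "metric_skew g K"
    and sym: "\<And>a b. g a b = g b a"
    and inv: "\<And>a b. (\<Sum>s\<in>UNIV. g a s * h s b) = (if a = b then 1 else 0)"
    and no_2_torsion: "\<And>x::'a. x + x = 0 \<Longrightarrow> x = 0"
  shows "(\<Sum>a\<in>UNIV. K a b a) = 0"
proof -
  define M where "M a t = (\<Sum>s\<in>UNIV. K a b s * g s t)" for a t
  have M_antisym: "M a t = - M t a" for a t
  proof -
    have "M a t + M t a = (\<Sum>s\<in>UNIV. K a b s * g s t + K t b s * g a s)"
      unfolding M_def by (simp add: sum.distrib sym)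
    also have "\<dots> = 0"
      using skew unfolding metric_skew_def by blast
    finally show ?thesis
      by (simp add: eq_neg_iff_add_eq_0)
  qed
  have "(\<Sum>a\<in>UNIV. K a b a) = (\<Sum>a\<in>UNIV. \<Sum>s\<in>UNIV. K a b s * (\<Sum>t\<in>UNIV. g s t * h t a))"
    by (simp add: inv if_zero_mult cong: if_cong)
  also have "\<dots> = (\<Sum>a\<in>UNIV. \<Sum>t\<in>UNIV. M a t * h t a)"
    unfolding M_def
    by (simp only: sum_distrib_left sum_distrib_right mult.assoc) (rule sum.cong[OF refl sum.swap])
  finally have trace: "(\<Sum>a\<in>UNIV. K a b a) = (\<Sum>a\<in>UNIV. \<Sum>t\<in>UNIV. M a t * h t a)" .
  also have "\<dots> = (\<Sum>t\<in>UNIV. \<Sum>a\<in>UNIV. - (M t a * h a t))"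
  proof -
    have "M a t * h t a = - (M t a * h a t)" for a t
      using M_antisym[of a t] right_inverse_symmetric[OF sym inv, of t a] by simp
    then show ?thesis
      by (subst sum.swap) (rule sum.cong[OF refl sum.cong[OF refl]])
  qed
  also have "\<dots> = - (\<Sum>a\<in>UNIV. K a b a)"
    by (simp add: sum_negf trace)
  finally have "(\<Sum>a\<in>UNIV. K a b a) + (\<Sum>a\<in>UNIV. K a b a) = 0"
    by (simp only: eq_neg_iff_add_eq_0)
  then show ?thesis
    by (rule no_2_torsion)
qed

lemma metric_skew_contraction:
  fixes g :: "'i::finite \<Rightarrow> 'i \<Rightarrow> 'a::comm_ring_1"
  assumes "metric_skew g K"
  shows "(\<Sum>b\<in>UNIV. \<Sum>r\<in>UNIV. \<Sum>a\<in>UNIV. g b r * K a b r * e a)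
       = - (\<Sum>a\<in>UNIV. \<Sum>b\<in>UNIV. K a a b * (\<Sum>d\<in>UNIV. g b d * e d))"
proof -
  have skew: "(\<Sum>b\<in>UNIV. \<Sum>r\<in>UNIV. g b r * K d b r) = - (\<Sum>a\<in>UNIV. \<Sum>b\<in>UNIV. K a a b * g b d)" for d
  proof -
    have "(\<Sum>a\<in>UNIV. \<Sum>s\<in>UNIV. K a a s * g s d + K d a s * g a s) = 0"
      using assms unfolding metric_skew_def by simp
    then have "(\<Sum>a\<in>UNIV. \<Sum>s\<in>UNIV. K a a s * g s d) + (\<Sum>a\<in>UNIV. \<Sum>s\<in>UNIV. K d a s * g a s) = 0"
      by (simp only: sum.distrib)
    moreover have "(\<Sum>b\<in>UNIV. \<Sum>r\<in>UNIV. g b r * K d b r) = (\<Sum>a\<in>UNIV. \<Sum>s\<in>UNIV. K d a s * g a s)"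
      by (simp only: mult.commute)
    ultimately show ?thesis
      by (simp add: eq_neg_iff_add_eq_0 add.commute)
  qed
  have "(\<Sum>b\<in>UNIV. \<Sum>r\<in>UNIV. \<Sum>a\<in>UNIV. g b r * K a b r * e a)
      = (\<Sum>d\<in>UNIV. (\<Sum>b\<in>UNIV. \<Sum>r\<in>UNIV. g b r * K d b r) * e d)"
    by (subst sum_swap3) (simp only: sum_distrib_right)
  also have "\<dots> = - (\<Sum>d\<in>UNIV. (\<Sum>a\<in>UNIV. \<Sum>b\<in>UNIV. K a a b * g b d) * e d)"
    by (simp add: skew sum_negf)
  also have "\<dots> = - (\<Sum>a\<in>UNIV. \<Sum>b\<in>UNIV. K a a b * (\<Sum>d\<in>UNIV. g b d * e d))"
    by (simp only: sum_distrib_left sum_distrib_right mult.assoc)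
      (rule arg_cong[where f = uminus], rule sum_swap3[symmetric])
  finally show ?thesis .
qed

lemma fst_dirac1:
  "fst (dirac1 gi E Gam u) = (\<Sum>b\<in>UNIV. \<Sum>r\<in>UNIV. gi b r * nabla1 E Gam b u r)"
  unfolding dirac1_def clif1_def
  by (simp add: fst_sum scal_def wedge1_def theta_def if_zero_mult sum_if_zero cong: if_cong)

lemma snd_dirac1:
  "snd (dirac1 gi E Gam u) p q = nabla1 E Gam p u q - nabla1 E Gam q u p"
  unfolding dirac1_def clif1_def
  by (simp add: snd_sum sum_apply scal_def wedge1_def theta_def sum_subtractf if_zero_mult sum_if_zero cong: if_cong)

lemma fst_fscale_wedge1: "fst (fscale h (wedge1 u v)) = 0"
  by (simp add: fscale_def wedge1_def)

lemma snd_sum_wedge1_theta: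
  fixes H :: "'i::finite \<Rightarrow> 'i \<Rightarrow> 'm \<Rightarrow> real"
  shows "snd (\<Sum>b\<in>UNIV. \<Sum>r\<in>UNIV. fscale (H b r) (wedge1 (theta b) (theta r))) p q = H p q - H q p"
  by (simp add: snd_sum sum_apply fscale_def wedge1_def theta_def if_zero_mult sum_subtractf right_diff_distrib sum_if_zero cong: if_cong)

lemma frame_bracket_apply:
  assumes "frame_brackets C E c" and "f \<in> C"
  shows "E b (E r f) - E r (E b f) = (\<Sum>a\<in>UNIV. c a b r * E a f)"
  using assms unfolding frame_brackets_def by blast

lemma torsion_contracted_antisym:
  assumes "frame_brackets C E c" and "f \<in> C"
  shows "(\<Sum>a\<in>UNIV. torsion Gam c a q p * E a f) = - (\<Sum>a\<in>UNIV. torsion Gam c a p q * E a f)"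
proof -
  have "(\<Sum>a\<in>UNIV. c a q p * E a f) = - (E p (E q f) - E q (E p f))"
    using frame_bracket_apply[OF assms, of q p] by simp
  also have "E p (E q f) - E q (E p f) = (\<Sum>a\<in>UNIV. c a p q * E a f)"
    using frame_bracket_apply[OF assms] .
  finally have "(\<Sum>a\<in>UNIV. c a q p * E a f) = - (\<Sum>a\<in>UNIV. c a p q * E a f)" .
  then show ?thesis
    unfolding torsion_def left_diff_distrib sum_subtractf by (simp add: algebra_simps)
qed

lemma snd_dirac1_dirac0:
  assumes "frame_brackets C E c" and "f \<in> C"
  shows "snd (dirac1 gi E Gam (dirac0 E f)) p q = - (\<Sum>a\<in>UNIV. torsion Gam c a p q * E a f)"
proof -
  have "snd (dirac1 gi E Gam (dirac0 E f)) p q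
      = (E p (E q f) - E q (E p f)) - (\<Sum>a\<in>UNIV. (Gam a p q - Gam a q p) * E a f)"
  proof -
    have "(\<Sum>r\<in>UNIV. E r f * Gam r s t) = (\<Sum>r\<in>UNIV. Gam r s t * E r f)" for s t
      by (simp only: mult.commute)
    then show ?thesis
      unfolding snd_dirac1 nabla1_def dirac0_def
      by (simp add: left_diff_distrib sum_subtractf)
  qed
  also have "E p (E q f) - E q (E p f) = (\<Sum>a\<in>UNIV. c a p q * E a f)"
    using frame_bracket_apply[OF assms] .
  finally have "snd (dirac1 gi E Gam (dirac0 E f)) p q
      = (\<Sum>a\<in>UNIV. c a p q * E a f) - (\<Sum>a\<in>UNIV. (Gam a p q - Gam a q p) * E a f)" .
  moreover have "(\<Sum>a\<in>UNIV. torsion Gam c a p q * E a f)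
      = (\<Sum>a\<in>UNIV. (Gam a p q - Gam a q p) * E a f) - (\<Sum>a\<in>UNIV. c a p q * E a f)"
    unfolding torsion_def by (simp only: left_diff_distrib sum_subtractf)
  ultimately show ?thesis
    by simp
qed

lemma fst_dirac1_dirac0:
  "fst (dirac1 gi E Gam (dirac0 E f)) =
     (\<Sum>b\<in>UNIV. \<Sum>r\<in>UNIV. gi b r * E b (E r f))
   - (\<Sum>b\<in>UNIV. \<Sum>r\<in>UNIV. \<Sum>a\<in>UNIV. gi b r * Gam a b r * E a f)"
proof -
  have "gi b r * (E a f * Gam a b r) = gi b r * Gam a b r * E a f" for a b r
    by (simp add: mult_ac)
  then show ?thesis
    unfolding fst_dirac1 nabla1_def dirac0_def
    by (simp only: right_diff_distrib sum_subtractf sum_distrib_left)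
qed

lemma snd_torsion_bivector:
  fixes E :: "'i::finite \<Rightarrow> ('m \<Rightarrow> real) \<Rightarrow> 'm \<Rightarrow> real"
  assumes "frame_brackets C E c" and "f \<in> C"
  shows "snd (\<Sum>a\<in>UNIV. \<Sum>b\<in>UNIV. \<Sum>r\<in>UNIV.
      fscale (const_fn (1/2) * torsion Gam c a b r * E a f) (wedge1 (theta b) (theta r))) p q
    = (\<Sum>a\<in>UNIV. torsion Gam c a p q * E a f)"
proof -
  have components: "snd (\<Sum>b\<in>UNIV. \<Sum>r\<in>UNIV.
      fscale (const_fn (1/2) * torsion Gam c a b r * E a f) (wedge1 (theta b) (theta r))) p q
    = const_fn (1/2) * torsion Gam c a p q * E a f - const_fn (1/2) * torsion Gam c a q p * E a f" for a
    by (rule snd_sum_wedge1_theta)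
  have "snd (\<Sum>a\<in>UNIV. \<Sum>b\<in>UNIV. \<Sum>r\<in>UNIV.
      fscale (const_fn (1/2) * torsion Gam c a b r * E a f) (wedge1 (theta b) (theta r))) p q
    = const_fn (1/2) * ((\<Sum>a\<in>UNIV. torsion Gam c a p q * E a f) - (\<Sum>a\<in>UNIV. torsion Gam c a q p * E a f))"
    by (subst snd_sum, simp only: sum_apply components,
        simp only: right_diff_distrib sum_subtractf sum_distrib_left mult.assoc)
  also have "\<dots> = (\<Sum>a\<in>UNIV. torsion Gam c a p q * E a f)"
    unfolding torsion_contracted_antisym[OF assms, of Gam p q]
    by (simp add: fun_eq_iff const_fn_def)
  finally show ?thesis .
qed

lemma dirac_squared_eq:
  fixes E :: "'i::finite \<Rightarrow> ('m \<Rightarrow> real) \<Rightarrow> 'm \<Rightarrow> real"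
  assumes "frame_brackets C E c" and "f \<in> C"
  shows "dirac1 gi E Gam (dirac0 E f) =
           scal (\<Sum>b\<in>UNIV. \<Sum>r\<in>UNIV. gi b r * E b (E r f))
         - scal (\<Sum>b\<in>UNIV. \<Sum>r\<in>UNIV. \<Sum>a\<in>UNIV. gi b r * Gam a b r * E a f)
         - (\<Sum>a\<in>UNIV. \<Sum>b\<in>UNIV. \<Sum>r\<in>UNIV.
              fscale (const_fn (1/2) * torsion Gam c a b r * E a f) (wedge1 (theta b) (theta r)))"
    (is "?lhs = ?rhs")
proof (rule prod_eqI)
  show "fst ?lhs = fst ?rhs"
    by (simp add: fst_dirac1_dirac0 scal_def fst_sum fst_fscale_wedge1)
  show "snd ?lhs = snd ?rhs"
    by (simp add: fun_eq_iff snd_dirac1_dirac0[OF assms] scal_def snd_torsion_bivector[OF assms])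
qed

lemma nondeg_metric_right_inverse:
  assumes "nondeg_metric C gi"
  obtains h where "\<And>a b. (\<Sum>s\<in>UNIV. gi a s * h s b) = (if a = b then 1 else 0)"
proof -
  from assms obtain h where "\<And>x a b. (\<Sum>s\<in>UNIV. gi a s x * h s b x) = (if a = b then 1 else 0)"
    unfolding nondeg_metric_def by blast
  then have "(\<Sum>s\<in>UNIV. gi a s * h s b) = (if a = b then 1 else 0)" for a b
    by (simp add: fun_eq_iff sum_apply)
  then show ?thesis
    using that by blast
qed

lemma metric_compatible_diff_skew:
  assumes "metric_compatible E gi Gam" and "metric_compatible E gi LC"
  shows "metric_skew gi (Gam - LC)"
  unfolding metric_skew_def
proof (intro allI)
  fix a b r
  have "E b (gi a r) = - (\<Sum>s\<in>UNIV. Gam a b s * gi s r + Gam r b s * gi a s)"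
    and "E b (gi a r) = - (\<Sum>s\<in>UNIV. LC a b s * gi s r + LC r b s * gi a s)"
    using assms unfolding metric_compatible_def by blast+
  then have "(\<Sum>s\<in>UNIV. Gam a b s * gi s r + Gam r b s * gi a s)
      = (\<Sum>s\<in>UNIV. LC a b s * gi s r + LC r b s * gi a s)"
    by simp
  moreover have "(\<Sum>s\<in>UNIV. (Gam - LC) a b s * gi s r + (Gam - LC) r b s * gi a s)
      = (\<Sum>s\<in>UNIV. Gam a b s * gi s r + Gam r b s * gi a s)
      - (\<Sum>s\<in>UNIV. LC a b s * gi s r + LC r b s * gi a s)"
    unfolding sum_subtractf[symmetric] by (rule sum.cong) (simp_all add: algebra_simps)
  ultimately show "(\<Sum>s\<in>UNIV. (Gam - LC) a b s * gi s r + (Gam - LC) r b s * gi a s) = 0"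
    by simp
qed

lemma torsion_eq_contorsion_antisym:
  assumes "torsion LC c a b r = 0"
  shows "torsion Gam c a b r = (Gam - LC) a b r - (Gam - LC) a r b"
  using assms unfolding torsion_def by (simp add: algebra_simps)

lemma connection_contraction_eq:
  fixes E :: "'i::finite \<Rightarrow> ('m \<Rightarrow> real) \<Rightarrow> 'm \<Rightarrow> real"
  assumes RC: "riemann_cartan C E c gi Gam" and LC: "levi_civita C E c gi LC"
  shows "(\<Sum>b\<in>UNIV. \<Sum>r\<in>UNIV. \<Sum>a\<in>UNIV. gi b r * Gam a b r * e a)
       = (\<Sum>b\<in>UNIV. \<Sum>r\<in>UNIV. \<Sum>a\<in>UNIV. gi b r * LC a b r * e a)
       - (\<Sum>a\<in>UNIV. \<Sum>b\<in>UNIV. torsion Gam c a a b * (\<Sum>d\<in>UNIV. gi b d * e d))"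
proof -
  define K where "K = Gam - LC"
  from RC LC have nondeg: "nondeg_metric C gi" and skew: "metric_skew gi K"
    and torsion_free: "\<And>a b r. torsion LC c a b r = 0"
    unfolding riemann_cartan_def levi_civita_def K_def by (auto intro: metric_compatible_diff_skew)
  obtain h where inv: "\<And>a b. (\<Sum>s\<in>UNIV. gi a s * h s b) = (if a = b then 1 else 0)"
    using nondeg_metric_right_inverse[OF nondeg] by blast
  have sym: "\<And>a b. gi a b = gi b a"
    using nondeg unfolding nondeg_metric_def by blast
  have no_2_torsion: "x + x = 0 \<Longrightarrow> x = 0" for x :: "'m \<Rightarrow> real"
    by (simp add: fun_eq_iff)
  have trace: "(\<Sum>a\<in>UNIV. K a b a) = 0" for b
    using metric_skew_trace[OF skew sym inv no_2_torsion] .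
  have "(\<Sum>a\<in>UNIV. \<Sum>b\<in>UNIV. K a b a * (\<Sum>d\<in>UNIV. gi b d * e d)) = 0"
    by (subst sum.swap) (simp add: sum_distrib_right[symmetric] trace)
  then have "(\<Sum>a\<in>UNIV. \<Sum>b\<in>UNIV. torsion Gam c a a b * (\<Sum>d\<in>UNIV. gi b d * e d))
      = (\<Sum>a\<in>UNIV. \<Sum>b\<in>UNIV. K a a b * (\<Sum>d\<in>UNIV. gi b d * e d))"
    by (simp only: torsion_eq_contorsion_antisym[OF torsion_free] K_def[symmetric]
        left_diff_distrib sum_subtractf diff_zero)
  also have "\<dots> = - (\<Sum>b\<in>UNIV. \<Sum>r\<in>UNIV. \<Sum>a\<in>UNIV. gi b r * K a b r * e a)"
    by (simp add: metric_skew_contraction[OF skew])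
  finally have "(\<Sum>b\<in>UNIV. \<Sum>r\<in>UNIV. \<Sum>a\<in>UNIV. gi b r * K a b r * e a)
      = - (\<Sum>a\<in>UNIV. \<Sum>b\<in>UNIV. torsion Gam c a a b * (\<Sum>d\<in>UNIV. gi b d * e d))"
    by simp
  moreover have "(\<Sum>b\<in>UNIV. \<Sum>r\<in>UNIV. \<Sum>a\<in>UNIV. gi b r * Gam a b r * e a)
      = (\<Sum>b\<in>UNIV. \<Sum>r\<in>UNIV. \<Sum>a\<in>UNIV. gi b r * LC a b r * e a)
      + (\<Sum>b\<in>UNIV. \<Sum>r\<in>UNIV. \<Sum>a\<in>UNIV. gi b r * K a b r * e a)"
    unfolding K_def by (simp add: algebra_simps sum.distrib[symmetric])
  ultimately show ?thesis
    by simp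
qed

theorem mainTheorem3:
  fixes C :: "('m \<Rightarrow> real) set"
    and E :: "'i::finite \<Rightarrow> ('m \<Rightarrow> real) \<Rightarrow> ('m \<Rightarrow> real)"
    and c Gam LC :: "'i \<Rightarrow> 'i \<Rightarrow> 'i \<Rightarrow> 'm \<Rightarrow> real"
    and gi :: "'i \<Rightarrow> 'i \<Rightarrow> 'm \<Rightarrow> real"
    and f :: "'m \<Rightarrow> real"
  assumes RC: "riemann_cartan C E c gi Gam"
    and LC: "levi_civita C E c gi LC"
    and f: "f \<in> C"
  shows "(dirac1 gi E Gam (dirac0 E f) =
           scal (\<Sum>b\<in>UNIV. \<Sum>r\<in>UNIV. gi b r * E b (E r f))
         - scal (\<Sum>b\<in>UNIV. \<Sum>r\<in>UNIV. \<Sum>a\<in>UNIV. gi b r * Gam a b r * E a f)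
         - (\<Sum>a\<in>UNIV. \<Sum>b\<in>UNIV. \<Sum>r\<in>UNIV.
              fscale (const_fn (1/2) * torsion Gam c a b r * E a f) (wedge1 (theta b) (theta r))))
    \<and> (dirac1 gi E Gam (dirac0 E f) =
           scal (\<Sum>b\<in>UNIV. \<Sum>a\<in>UNIV. gi b a * E b (E a f))
         - scal (\<Sum>b\<in>UNIV. \<Sum>r\<in>UNIV. \<Sum>a\<in>UNIV. gi b r * LC a b r * E a f)
         + scal (\<Sum>a\<in>UNIV. \<Sum>b\<in>UNIV. torsion Gam c a a b * (\<Sum>d\<in>UNIV. gi b d * E d f))
         - (\<Sum>a\<in>UNIV. \<Sum>r\<in>UNIV. \<Sum>s\<in>UNIV.
              fscale (const_fn (1/2) * torsion Gam c a r s * E a f) (wedge1 (theta r) (theta s))))"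
proof -
  from RC have brackets: "frame_brackets C E c"
    unfolding riemann_cartan_def by blast
  have connection: "scal (\<Sum>b\<in>UNIV. \<Sum>r\<in>UNIV. \<Sum>a\<in>UNIV. gi b r * Gam a b r * E a f)
      = scal (\<Sum>b\<in>UNIV. \<Sum>r\<in>UNIV. \<Sum>a\<in>UNIV. gi b r * LC a b r * E a f)
      - scal (\<Sum>a\<in>UNIV. \<Sum>b\<in>UNIV. torsion Gam c a a b * (\<Sum>d\<in>UNIV. gi b d * E d f))"
    unfolding connection_contraction_eq[OF RC LC] by (simp add: scal_def)
  show ?thesis
    unfolding dirac_squared_eq[OF brackets f] connection by (simp add: algebra_simps)
qed

end
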